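(* Let $b>0$. For any $f\in L^2_{\rm loc}(\mathbb R)$, $\|f\|_{\mathcal S^2}<\infty$ if and only if $\sup_{u\in\mathbb R}\int_{\mathbb R}|f(t+u)|^2\frac{dt}{b^2+t^2}<\infty$. Moreover, $$k_b\,\|f\|_{\mathcal S^2}^2\le\sup_{u\in\mathbb R}\int_{\mathbb R}|f(t+u)|^2\frac{dt}{b^2+t^2}\le K_b\,\|f\|_{\mathcal S^2}^2,$$ where $k_b=\frac{1}{b^2+1}$ and $K_b=2\sum_{w\ge0}\frac{1}{b^2+w^2}+\frac{1}{b^2}$.
   Context: For $f\in L^2_{\rm loc}(\mathbb R)$, $\|f\|_{\mathcal S^2}=\sup_{x\in\mathbb R}\big(\int_x^{x+1}|f(t)|^2dt\big)^{1/2}$. *)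

theory Defs
  imports "HOL-Analysis.Analysis"
begin

definition L2_loc :: "(real \<Rightarrow> complex) \<Rightarrow> bool" where
  "L2_loc f \<longleftrightarrow> f \<in> borel_measurable lebesgue \<and>
     (\<forall>a b. (\<integral>\<^sup>+ t\<in>{a..b}. ennreal ((cmod (f t))\<^sup>2) \<partial>lebesgue) < \<infinity>)"

definition S2_norm :: "(real \<Rightarrow> complex) \<Rightarrow> ennreal" where
  "S2_norm f = (SUP x::real. ennreal (sqrt (enn2real
      (\<integral>\<^sup>+ t\<in>{x..x+1}. ennreal ((cmod (f t))\<^sup>2) \<partial>lebesgue))))"

definition weighted_sup :: "real \<Rightarrow> (real \<Rightarrow> complex) \<Rightarrow> ennreal" where
  "weighted_sup b f = (SUP u::real.
      \<integral>\<^sup>+ t. ennreal ((cmod (f (t + u)))\<^sup>2 / (b\<^sup>2 + t\<^sup>2)) \<partial>lebesgue)"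

definition k_const :: "real \<Rightarrow> real" where
  "k_const b = 1 / (b\<^sup>2 + 1)"

definition K_const :: "real \<Rightarrow> real" where
  "K_const b = 2 * (\<Sum>w. 1 / (b\<^sup>2 + (real w)\<^sup>2)) + 1 / b\<^sup>2"

end

(* On the unit window [0, 1] the weight 1/(b^2 + t^2) is at least 1/(b^2 + 1); applied to every
   translate of f this gives the lower bound. Conversely, on the windows [n, n+1] and [-n-1, -n]
   the weight is at most 1/(b^2 + n^2), so every translate of the weighted integral is at most
   2 * sum_n 1/(b^2 + n^2) times the supremum of the unit-window integrals of |f|^2, which is the
   squared Stepanov norm. *)

theory Submission
  imports Defs
begin

definition unit_window :: "(real \<Rightarrow> real) \<Rightarrow> real \<Rightarrow> ennreal" where
  "unit_window g x = (\<integral>\<^sup>+ t\<in>{x..x+1}. ennreal (g t) \<partial>lebesgue)"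

lemma lebesgue_measurable_ident [measurable]: "(\<lambda>t::real. t) \<in> borel_measurable lebesgue"
  using measurable_completion[of "\<lambda>t::real. t" lborel borel] by simp

lemma lebesgue_measurable_translation [measurable]:
  "(\<lambda>t::real. t + u) \<in> lebesgue \<rightarrow>\<^sub>M lebesgue"
  using lebesgue_affine_measurable[where c="\<lambda>_. 1" and t=u] by (simp add: add.commute)

lemma nn_integral_lebesgue_translate:
  fixes F :: "real \<Rightarrow> ennreal"
  assumes "F \<in> borel_measurable lebesgue"
  shows "(\<integral>\<^sup>+ t. F (t + u) \<partial>lebesgue) = (\<integral>\<^sup>+ s. F s \<partial>lebesgue)"
  using nn_integral_real_affine_lebesgue[OF assms, of 1 u] by (simp add: add.commute)

lemma unit_window_translate:
  assumes [measurable]: "g \<in> borel_measurable lebesgue"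
  shows "unit_window (\<lambda>t. g (t + u)) x = unit_window g (x + u)"
proof -
  have "(\<lambda>s. ennreal (g s) * indicator {x+u..x+u+1} s) \<in> borel_measurable lebesgue"
    by measurable
  from nn_integral_lebesgue_translate[OF this, of u]
  have "unit_window g (x + u) = (\<integral>\<^sup>+ t. ennreal (g (t + u)) * indicator {x+u..x+u+1} (t + u) \<partial>lebesgue)"
    by (simp add: unit_window_def)
  also have "\<dots> = unit_window (\<lambda>t. g (t + u)) x"
    by (simp add: unit_window_def indicator_def)
  finally show ?thesis ..
qed

lemma SUP_power2_ennreal:
  fixes a :: "'i \<Rightarrow> ennreal"
  shows "(SUP i\<in>I. a i)\<^sup>2 = (SUP i\<in>I. (a i)\<^sup>2)"
proof (rule antisym)
  have "(SUP i\<in>I. a i)\<^sup>2 = (SUP j\<in>I. SUP i\<in>I. a i * a j)"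
    by (simp add: power2_eq_square SUP_mult_left_ennreal SUP_mult_right_ennreal)
  also have "\<dots> \<le> (SUP i\<in>I. (a i)\<^sup>2)"
  proof (intro SUP_least)
    fix i j assume "i \<in> I" "j \<in> I"
    have "a i * a j \<le> (a i)\<^sup>2 \<or> a i * a j \<le> (a j)\<^sup>2"
      by (cases "a i \<le> a j") (simp_all add: power2_eq_square mult_left_mono mult_right_mono)
    with \<open>i \<in> I\<close> \<open>j \<in> I\<close> show "a i * a j \<le> (SUP i\<in>I. (a i)\<^sup>2)"
      by (meson SUP_upper2 order_refl)
  qed
  finally show "(SUP i\<in>I. a i)\<^sup>2 \<le> (SUP i\<in>I. (a i)\<^sup>2)" .
  show "(SUP i\<in>I. (a i)\<^sup>2) \<le> (SUP i\<in>I. a i)\<^sup>2"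
    by (intro SUP_least power_mono SUP_upper) auto
qed

lemma S2_norm_power2:
  assumes "L2_loc f"
  shows "(S2_norm f)\<^sup>2 = (SUP x. unit_window (\<lambda>t. (cmod (f t))\<^sup>2) x)"
proof -
  have "(ennreal (sqrt (enn2real (unit_window (\<lambda>t. (cmod (f t))\<^sup>2) x))))\<^sup>2
      = unit_window (\<lambda>t. (cmod (f t))\<^sup>2) x" for x
    \<comment> \<open>enn2real sends \<infinity> to 0, so the local integrability of f is essential here\<close>
    using assms by (simp add: ennreal_power L2_loc_def unit_window_def)
  then show ?thesis
    unfolding S2_norm_def SUP_power2_ennreal by (simp add: unit_window_def)
qed

lemma summable_inverse_square_plus:
  fixes b :: real
  shows "summable (\<lambda>n::nat. 1 / (b\<^sup>2 + (real n)\<^sup>2))"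
proof (rule summable_comparison_test'[where N=1])
  show "summable (\<lambda>n::nat. inverse (real n ^ 2))"
    by (rule inverse_power_summable) simp
  fix n :: nat assume "n \<ge> 1"
  moreover have "b\<^sup>2 + (real n)\<^sup>2 \<ge> (real n)\<^sup>2" by simp
  ultimately show "norm (1 / (b\<^sup>2 + (real n)\<^sup>2)) \<le> inverse (real n ^ 2)"
    by (simp add: inverse_eq_divide frac_le)
qed

lemma inverse_square_plus_le_window_series:
  fixes b t :: real
  assumes "b \<noteq> 0"
  shows "ennreal (1 / (b\<^sup>2 + t\<^sup>2)) \<le>
    (\<Sum>n. ennreal (1 / (b\<^sup>2 + (real n)\<^sup>2)) * indicator {real n..real n + 1} t) +
    (\<Sum>n. ennreal (1 / (b\<^sup>2 + (real n)\<^sup>2)) * indicator {- real n - 1..- real n} t)"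
    (is "_ \<le> ?pos + ?neg")
proof -
  have term_le_series: "F n \<le> (\<Sum>n. F n)" for F :: "nat \<Rightarrow> ennreal" and n
    using sum_le_suminf[of F "{n}"] by (auto simp: summableI)
  have weight_le: "ennreal (1 / (b\<^sup>2 + t\<^sup>2)) \<le> ennreal (1 / (b\<^sup>2 + (real n)\<^sup>2))"
    if "real n \<le> \<bar>t\<bar>" for n :: nat
  proof (rule ennreal_leI)
    have "(real n)\<^sup>2 \<le> t\<^sup>2"
      using that by (metis abs_of_nat power2_abs power_mono of_nat_0_le_iff)
    then show "1 / (b\<^sup>2 + t\<^sup>2) \<le> 1 / (b\<^sup>2 + (real n)\<^sup>2)"
      using assms by (intro divide_left_mono add_left_mono mult_pos_pos add_pos_nonneg) auto
  qed
  define n where "n = nat \<lfloor>\<bar>t\<bar>\<rfloor>"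
  have n: "real n \<le> \<bar>t\<bar>" "\<bar>t\<bar> \<le> real n + 1"
    unfolding n_def by linarith+
  show ?thesis
  proof (cases "t \<ge> 0")
    case True
    with n weight_le[OF n(1)]
    have "ennreal (1 / (b\<^sup>2 + t\<^sup>2)) \<le> ennreal (1 / (b\<^sup>2 + (real n)\<^sup>2)) * indicator {real n..real n + 1} t"
      by (simp add: indicator_def)
    also have "\<dots> \<le> ?pos" by (rule term_le_series)
    finally show ?thesis by (simp add: add_increasing2)
  next
    case False
    with n weight_le[OF n(1)]
    have "ennreal (1 / (b\<^sup>2 + t\<^sup>2)) \<le> ennreal (1 / (b\<^sup>2 + (real n)\<^sup>2)) * indicator {- real n - 1..- real n} t"
      by (simp add: indicator_def)
    also have "\<dots> \<le> ?neg" by (rule term_le_series)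
    finally show ?thesis by (simp add: add_increasing)
  qed
qed

lemma nn_integral_window_series_le:
  fixes g :: "real \<Rightarrow> real" and c :: "nat \<Rightarrow> real" and h :: "nat \<Rightarrow> real"
  assumes [measurable]: "g \<in> borel_measurable lebesgue"
    and c: "summable c" "\<And>n. c n \<ge> 0"
  shows "(\<integral>\<^sup>+ t. ennreal (g t) * (\<Sum>n. ennreal (c n) * indicator {h n..h n + 1} t) \<partial>lebesgue)
    \<le> ennreal (suminf c) * (SUP x. unit_window g x)"
proof -
  have "(\<integral>\<^sup>+ t. ennreal (g t) * (\<Sum>n. ennreal (c n) * indicator {h n..h n + 1} t) \<partial>lebesgue)
      = (\<integral>\<^sup>+ t. (\<Sum>n. ennreal (c n) * (ennreal (g t) * indicator {h n..h n + 1} t)) \<partial>lebesgue)"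
    by (simp add: ennreal_suminf_cmult[symmetric] mult.left_commute)
  also have "\<dots> = (\<Sum>n. ennreal (c n) * unit_window g (h n))"
    unfolding unit_window_def
    by (subst nn_integral_suminf) (measurable, simp add: nn_integral_cmult)
  also have "\<dots> \<le> (\<Sum>n. ennreal (c n) * (SUP x. unit_window g x))"
    by (intro suminf_le mult_left_mono SUP_upper) auto
  also have "\<dots> = ennreal (suminf c) * (SUP x. unit_window g x)"
    using c by (simp add: ennreal_suminf_cmult suminf_ennreal2 mult.commute)
  finally show ?thesis .
qed

lemma weighted_integral_le_SUP_unit_window:
  fixes b :: real and g :: "real \<Rightarrow> real"
  assumes "b \<noteq> 0" and [measurable]: "g \<in> borel_measurable lebesgue"
  shows "(\<integral>\<^sup>+ t. ennreal (g t / (b\<^sup>2 + t\<^sup>2)) \<partial>lebesgue)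
    \<le> ennreal (2 * (\<Sum>n. 1 / (b\<^sup>2 + (real n)\<^sup>2))) * (SUP x. unit_window g x)"
proof -
  define c where "c = (\<lambda>n::nat. 1 / (b\<^sup>2 + (real n)\<^sup>2))"
  define series where "series h t = (\<Sum>n. ennreal (c n) * indicator {h n..h n + 1} t)"
    for h :: "nat \<Rightarrow> real" and t :: real
  have c: "summable c" "\<And>n. c n \<ge> 0"
    unfolding c_def by (simp_all add: summable_inverse_square_plus)
  have "ennreal (g t / (b\<^sup>2 + t\<^sup>2)) \<le> ennreal (g t) * ennreal (1 / (b\<^sup>2 + t\<^sup>2))" for t
  proof (cases "g t \<ge> 0")
    case True
    then show ?thesis by (subst ennreal_mult[symmetric]) (auto simp: add_pos_nonneg)
  next
    case False
    then have "g t / (b\<^sup>2 + t\<^sup>2) \<le> 0" by (simp add: divide_nonpos_nonneg)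
    then show ?thesis by (simp add: ennreal_neg)
  qed
  also have "\<dots> t \<le> ennreal (g t) * series real t + ennreal (g t) * series (\<lambda>n. - real n - 1) t" for t
    using mult_left_mono[OF inverse_square_plus_le_window_series[OF assms(1), of t], of "ennreal (g t)"]
    by (simp add: series_def c_def distrib_left)
  finally have "(\<integral>\<^sup>+ t. ennreal (g t / (b\<^sup>2 + t\<^sup>2)) \<partial>lebesgue)
      \<le> (\<integral>\<^sup>+ t. ennreal (g t) * series real t + ennreal (g t) * series (\<lambda>n. - real n - 1) t \<partial>lebesgue)"
    by (rule nn_integral_mono)
  also have "\<dots> = (\<integral>\<^sup>+ t. ennreal (g t) * series real t \<partial>lebesgue)
        + (\<integral>\<^sup>+ t. ennreal (g t) * series (\<lambda>n. - real n - 1) t \<partial>lebesgue)"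
    unfolding series_def by (rule nn_integral_add) measurable
  also have "\<dots> \<le> ennreal (suminf c) * (SUP x. unit_window g x) + ennreal (suminf c) * (SUP x. unit_window g x)"
    unfolding series_def by (intro add_mono nn_integral_window_series_le c) measurable
  also have "\<dots> = ennreal (2 * suminf c) * (SUP x. unit_window g x)"
    using suminf_nonneg[OF c] by (simp only: mult_2 ennreal_plus distrib_right)
  finally show ?thesis by (simp add: c_def)
qed

lemma unit_window_le_weighted_integral:
  fixes b :: real and g :: "real \<Rightarrow> real"
  assumes "b \<noteq> 0" and [measurable]: "g \<in> borel_measurable lebesgue"
  shows "ennreal (k_const b) * unit_window g 0 \<le> (\<integral>\<^sup>+ t. ennreal (g t / (b\<^sup>2 + t\<^sup>2)) \<partial>lebesgue)"
proof -
  have "(\<lambda>t. ennreal (g t) * indicator {0..1} t) \<in> borel_measurable lebesgue"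
    by measurable
  then have "ennreal (k_const b) * unit_window g 0
      = (\<integral>\<^sup>+ t. ennreal (k_const b) * (ennreal (g t) * indicator {0..1} t) \<partial>lebesgue)"
    by (simp add: unit_window_def nn_integral_cmult)
  also have "\<dots> \<le> (\<integral>\<^sup>+ t. ennreal (g t / (b\<^sup>2 + t\<^sup>2)) \<partial>lebesgue)"
  proof (rule nn_integral_mono)
    fix t
    show "ennreal (k_const b) * (ennreal (g t) * indicator {0..1} t) \<le> ennreal (g t / (b\<^sup>2 + t\<^sup>2))"
    proof (cases "t \<in> {0..1} \<and> g t \<ge> 0")
      case True
      then have "t\<^sup>2 \<le> 1" by (simp add: power_le_one)
      with True assms(1) have "k_const b * g t \<le> g t / (b\<^sup>2 + t\<^sup>2)"
        unfolding k_const_def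
        by (simp add: divide_left_mono add_pos_nonneg mult_pos_pos)
      with True show ?thesis
        by (simp add: ennreal_mult''[symmetric] k_const_def ennreal_leI)
    next
      case False
      then show ?thesis by (auto simp: indicator_def ennreal_neg)
    qed
  qed
  finally show ?thesis .
qed

lemma SUP_unit_window_le_weighted_sup:
  fixes b :: real and f :: "real \<Rightarrow> complex"
  assumes "b \<noteq> 0" and [measurable]: "f \<in> borel_measurable lebesgue"
  shows "ennreal (k_const b) * (SUP x. unit_window (\<lambda>t. (cmod (f t))\<^sup>2) x) \<le> weighted_sup b f"
  unfolding SUP_mult_left_ennreal weighted_sup_def
proof (rule SUP_mono)
  fix x
  have "ennreal (k_const b) * unit_window (\<lambda>t. (cmod (f t))\<^sup>2) x
      = ennreal (k_const b) * unit_window (\<lambda>t. (cmod (f (t + x)))\<^sup>2) 0"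
    by (simp add: unit_window_translate[of "\<lambda>t. (cmod (f t))\<^sup>2"])
  also have "\<dots> \<le> (\<integral>\<^sup>+ t. ennreal ((cmod (f (t + x)))\<^sup>2 / (b\<^sup>2 + t\<^sup>2)) \<partial>lebesgue)"
    by (rule unit_window_le_weighted_integral[OF assms(1)]) measurable
  finally show "\<exists>u\<in>UNIV. ennreal (k_const b) * unit_window (\<lambda>t. (cmod (f t))\<^sup>2) x
      \<le> (\<integral>\<^sup>+ t. ennreal ((cmod (f (t + u)))\<^sup>2 / (b\<^sup>2 + t\<^sup>2)) \<partial>lebesgue)"
    by blast
qed

lemma weighted_sup_le_SUP_unit_window:
  fixes b :: real and f :: "real \<Rightarrow> complex"
  assumes "b \<noteq> 0" and [measurable]: "f \<in> borel_measurable lebesgue"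
  shows "weighted_sup b f
    \<le> ennreal (2 * (\<Sum>n. 1 / (b\<^sup>2 + (real n)\<^sup>2))) * (SUP x. unit_window (\<lambda>t. (cmod (f t))\<^sup>2) x)"
  unfolding weighted_sup_def
proof (rule SUP_least)
  fix u
  have "(SUP x. unit_window (\<lambda>t. (cmod (f (t + u)))\<^sup>2) x) \<le> (SUP x. unit_window (\<lambda>t. (cmod (f t))\<^sup>2) x)"
    by (intro SUP_least SUP_upper2) (auto simp: unit_window_translate[of "\<lambda>t. (cmod (f t))\<^sup>2"])
  with weighted_integral_le_SUP_unit_window[OF assms(1), of "\<lambda>t. (cmod (f (t + u)))\<^sup>2"]
  show "(\<integral>\<^sup>+ t. ennreal ((cmod (f (t + u)))\<^sup>2 / (b\<^sup>2 + t\<^sup>2)) \<partial>lebesgue)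
      \<le> ennreal (2 * (\<Sum>n. 1 / (b\<^sup>2 + (real n)\<^sup>2))) * (SUP x. unit_window (\<lambda>t. (cmod (f t))\<^sup>2) x)"
    by (auto elim!: order_trans intro: mult_left_mono)
qed

lemma less_top_iff_of_two_sided_bound:
  fixes S W :: ennreal and k K :: real
  assumes "k > 0" and "ennreal k * S \<le> W" and "W \<le> ennreal K * S"
  shows "S < \<infinity> \<longleftrightarrow> W < \<infinity>"
proof
  assume "S < \<infinity>"
  then have "ennreal K * S < \<infinity>" by (simp add: ennreal_mult_less_top)
  with assms(3) show "W < \<infinity>" by (rule le_less_trans)
next
  assume "W < \<infinity>"
  with assms(2) have "ennreal k * S < \<infinity>" by (rule le_less_trans)
  with assms(1) show "S < \<infinity>" by (auto simp: ennreal_mult_less_top)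
qed

theorem lemma6p5:
  fixes b :: real and f :: "real \<Rightarrow> complex"
  assumes "b > 0" and "L2_loc f"
  shows "(S2_norm f < \<infinity> \<longleftrightarrow> weighted_sup b f < \<infinity>) \<and>
         ennreal (k_const b) * (S2_norm f)\<^sup>2 \<le> weighted_sup b f \<and>
         weighted_sup b f \<le> ennreal (K_const b) * (S2_norm f)\<^sup>2"
proof -
  have b: "b \<noteq> 0" using assms(1) by simp
  have f: "f \<in> borel_measurable lebesgue"
    using assms(2) by (simp add: L2_loc_def)
  define S where "S = (S2_norm f)\<^sup>2"
  have lower: "ennreal (k_const b) * S \<le> weighted_sup b f"
    unfolding S_def S2_norm_power2[OF assms(2)] by (rule SUP_unit_window_le_weighted_sup[OF b f])
  have "weighted_sup b f \<le> ennreal (2 * (\<Sum>n. 1 / (b\<^sup>2 + (real n)\<^sup>2))) * S"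
    unfolding S_def S2_norm_power2[OF assms(2)] by (rule weighted_sup_le_SUP_unit_window[OF b f])
  also have "\<dots> \<le> ennreal (K_const b) * S"
    unfolding K_const_def by (intro mult_right_mono ennreal_leI) auto
  finally have upper: "weighted_sup b f \<le> ennreal (K_const b) * S" .
  have "k_const b > 0"
    unfolding k_const_def by (simp add: add_nonneg_pos)
  then have "S < \<infinity> \<longleftrightarrow> weighted_sup b f < \<infinity>"
    using lower upper by (rule less_top_iff_of_two_sided_bound)
  moreover have "S2_norm f < \<infinity> \<longleftrightarrow> S < \<infinity>"
    unfolding S_def by (simp add: power_less_top_ennreal)
  ultimately show ?thesis
    using lower upper by (simp add: S_def)
qed

end
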